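(* Let $A\in\mathbb{C}^{m\times n}$ be such that $\mathrm{rank}(AA^{\sim})=\mathrm{rank}(A^{\sim}A)=\mathrm{rank}(A)$. Then for arbitrary nonnegative integers $k$ and $l$, $$A^{\mathfrak{m}}=(A^{\sim}A)^kA^{\sim}\left[(A^{\sim}A)^{k+l+1}A^{\sim}\right]^{(1)}(A^{\sim}A)^lA^{\sim},$$ where $\left[(A^{\sim}A)^{k+l+1}A^{\sim}\right]^{(1)}$ is any $\{1\}$-inverse of $(A^{\sim}A)^{k+l+1}A^{\sim}$.
   Context: For a positive integer $k$, the Minkowski metric matrix of order $k$ is $G_k=\mathrm{diag}(1,-I_{k-1})$ (with $G_1=(1)$). For $M\in\mathbb{C}^{p\times q}$, the Minkowski adjoint is $M^{\sim}=G_qM^*G_p$, where $M^*$ is the conjugate transpose. The Minkowski inverse of $A\in\mathbb{C}^{m\times n}$, denoted $A^{\mathfrak{m}}$, is the (unique) matrix $X\in\mathbb{C}^{n\times m}$ with $AXA=A$, $XAX=X$, $(AX)^{\sim}=AX$, $(XA)^{\sim}=XA$; it exists under the stated rank hypothesis. A $\{1\}$-inverse of $M$ is any $M^{(1)}$ with $MM^{(1)}M=M$; $(A^{\sim}A)^0=I_n$. *)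

theory Defs
  imports "Jordan_Normal_Form.Schur_Decomposition" "Jordan_Normal_Form.DL_Rank"
begin

definition minkowski_G :: "nat \<Rightarrow> complex mat" where
  "minkowski_G k = mat k k (\<lambda>(i,j). if i = j then (if i = 0 then 1 else -1) else 0)"

definition mink_adj :: "complex mat \<Rightarrow> complex mat" where
  "mink_adj M = minkowski_G (dim_col M) * mat_adjoint M * minkowski_G (dim_row M)"

definition crank :: "complex mat \<Rightarrow> nat" where
  "crank M = vec_space.rank (dim_row M) M"

definition is_mink_inverse :: "complex mat \<Rightarrow> complex mat \<Rightarrow> bool" where
  "is_mink_inverse A X \<longleftrightarrow> X \<in> carrier_mat (dim_col A) (dim_row A) \<and>
     A * X * A = A \<and> X * A * X = X \<and>
     mink_adj (A * X) = A * X \<and> mink_adj (X * A) = X * A"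

definition mink_inverse :: "complex mat \<Rightarrow> complex mat" where
  "mink_inverse A = (THE X. is_mink_inverse A X)"

end

theory Submission
  imports Defs
begin

(* Write B for the Minkowski adjoint of A, so that the adjoint of B is A again and the adjoint
   reverses products. The hypothesis rank (A B) = rank A gives a factorisation A = A B V, and
   rank (B A) = rank A says that B A and A have the same kernel. Together with the adjoint this
   yields four cancellation laws (B A Z = B A Z' implies A Z = A Z', A B Z = A B Z' implies
   B Z = B Z', and their mirror images on the right), which iterate to cancellation of powers
   of B A. For Y = (B A)^k B X (B A)^l B, multiplying A Y A by (B A)^l B on the left and by
   (B A)^k B on the right gives P X P = P with P = (B A)^(k+l+1) B, so cancellation yields
   A Y A = A. Since Y = T B = B S for suitable T and S, the other three Penrose equations
   follow from A Y A = A, and the Minkowski inverse is unique. *)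

section \<open>Rank and column spaces\<close>

lemma (in vectorspace) carrier_eq_zero_if_dim_0:
  assumes "fin_dim" and "dim = 0"
  shows "carrier V = {\<zero>\<^bsub>V\<^esub>}"
proof -
  obtain b where b: "finite b" "basis b" using finite_basis_exists[OF assms(1)] by blast
  have "b = {}" using dim_basis[OF b] assms(2) b(1) by simp
  then have "span {} = carrier V" using b(2) unfolding basis_def by simp
  then show ?thesis using span_empty by simp
qed

lemma (in vectorspace) fin_dim_subspace:
  assumes U: "VectorSpace.subspace K U V" and fd: "fin_dim"
  shows "vectorspace.fin_dim K (vs U)"
proof -
  interpret U: vectorspace K "vs U" using subspace_is_vs[OF U] .
  have sub: "submodule K U V" using U unfolding subspace_def by auto
  have UC: "U \<subseteq> carrier V" using sub unfolding submodule_def by auto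
  define P where "P = (\<lambda>S. S \<subseteq> carrier (vs U) \<and> U.lin_indpt S)"
  have bound: "finite S \<and> card S \<le> dim" if "P S" for S
  proof -
    have S: "S \<subseteq> U" using that unfolding P_def by auto
    have "lin_indpt S" using that span_li_not_depend(2)[OF S sub] unfolding P_def by auto
    with S UC show ?thesis using li_le_dim[OF fd, of S] by auto
  qed
  have "P {}" unfolding P_def using U.module.finite_lin_indpt2 by auto
  then obtain S where S: "finite S" "maximal S P"
    using maximal_exists[of P dim "{}"] bound by blast
  have "U.gen_set S" using U.max_li_is_gen S(2) unfolding P_def by auto
  moreover have "S \<subseteq> carrier (vs U)" using S(2) unfolding maximal_def P_def by auto
  ultimately show ?thesis unfolding U.fin_dim_def using S(1) by blast
qed

lemma (in vectorspace) subspace_eq_carrier_if_dim_eq: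
  assumes U: "VectorSpace.subspace K U V" and fd: "fin_dim" and d: "vectorspace.dim K (vs U) = dim"
  shows "U = carrier V"
proof -
  interpret U: vectorspace K "vs U" using subspace_is_vs[OF U] .
  have sub: "submodule K U V" using U unfolding subspace_def by auto
  obtain b where b: "finite b" "U.basis b"
    using U.finite_basis_exists[OF fin_dim_subspace[OF U fd]] by blast
  have bU: "b \<subseteq> U" using b(2) unfolding U.basis_def by auto
  have "lin_indpt b" using b(2) span_li_not_depend(2)[OF bU sub] unfolding U.basis_def by auto
  moreover have "card b = dim" using U.dim_basis[OF b] d by simp
  ultimately have "basis b" using dim_li_is_basis[OF fd b(1)] bU sub
    unfolding submodule_def by auto
  then have "carrier V = span b" unfolding basis_def by auto
  also have "\<dots> \<subseteq> U" using span_is_subset[OF bU sub] .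
  finally show ?thesis using sub unfolding submodule_def by auto
qed

lemma (in linear_map) inj_on_if_dim_imT_eq:
  assumes fd: "V.fin_dim" and d: "vectorspace.dim K (W.vs imT) = V.dim"
  shows "inj_on T (carrier V)"
proof (rule Ke0_imp_inj)
  interpret Ker: vectorspace K "V.vs kerT" using V.subspace_is_vs[OF kerT_is_subspace] .
  show "carrier (V.vs kerT) = {\<zero>\<^bsub>V\<^esub>}"
    using Ker.carrier_eq_zero_if_dim_0[OF V.fin_dim_subspace[OF kerT_is_subspace fd]]
      rank_nullity[OF fd] d by simp
qed

lemma inj_on_col_space_if_rank_mult_eq:
  fixes P Q :: "'a::field mat"
  assumes P: "P \<in> carrier_mat p m" and Q: "Q \<in> carrier_mat m q"
    and r: "vec_space.rank p (P * Q) = vec_space.rank m Q"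
  shows "inj_on (\<lambda>v. P *\<^sub>v v) (vec_space.col_space m Q)"
proof -
  interpret V: vec_space "TYPE('a)" m .
  interpret W: vec_space "TYPE('a)" p .
  have PQ: "P * Q \<in> carrier_mat p q" using P Q by auto
  let ?SQ = "V.col_space Q" and ?SPQ = "W.col_space (P * Q)"
  have SQ_eq: "?SQ = {y \<in> carrier_vec m. \<exists>x\<in>carrier_vec q. Q *\<^sub>v x = y}"
    using V.col_space_eq[OF Q] Q by auto
  have SPQ_eq: "?SPQ = {y \<in> carrier_vec p. \<exists>x\<in>carrier_vec q. (P * Q) *\<^sub>v x = y}"
    using W.col_space_eq[OF PQ] P Q by auto
  have subQ: "VectorSpace.subspace class_ring ?SQ V.V"
    unfolding V.col_space_def using cols_dim[of "Q"] Q by (intro V.span_is_subspace) auto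
  have subPQ: "VectorSpace.subspace class_ring ?SPQ W.V"
    unfolding W.col_space_def using cols_dim[of "P * Q"] P by (intro W.span_is_subspace) auto
  interpret SQ: vectorspace class_ring "V.vs ?SQ" using V.subspace_is_vs[OF subQ] .
  interpret SPQ: vectorspace class_ring "W.vs ?SPQ" using W.subspace_is_vs[OF subPQ] .
  interpret T: linear_map class_ring "V.vs ?SQ" "W.vs ?SPQ" "\<lambda>v. P *\<^sub>v v"
    unfolding linear_map_def mod_hom_def mod_hom_axioms_def LinearCombinations.module_hom_def
    using SQ.vectorspace_axioms SPQ.vectorspace_axioms P Q
    by (auto simp: vectorspace_def SQ_eq SPQ_eq mult_add_distrib_mat_vec mult_mat_vec)
  have "T.imT = ?SPQ"
    unfolding T.im_def unfolding SQ_eq SPQ_eq using P Q by auto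
  then have "vectorspace.dim class_ring (SPQ.vs T.imT) = SQ.dim"
    using r unfolding V.rank_def W.rank_def V.col_space_def W.col_space_def by simp
  then show ?thesis
    using T.inj_on_if_dim_imT_eq V.fin_dim_span_cols[OF Q] unfolding V.col_space_def by simp
qed

lemma mult_left_cancel_if_rank_mult_eq:
  fixes P Q :: "'a::field mat"
  assumes P: "P \<in> carrier_mat p m" and Q: "Q \<in> carrier_mat m q"
    and r: "vec_space.rank p (P * Q) = vec_space.rank m Q"
    and Z: "Z \<in> carrier_mat q c" and Z': "Z' \<in> carrier_mat q c"
    and eq: "P * (Q * Z) = P * (Q * Z')"
  shows "Q * Z = Q * Z'"
proof (rule mat_col_eqI)
  interpret V: vec_space "TYPE('a)" m .
  fix j assume "j < dim_col (Q * Z')"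
  then have j: "j < c" using Z' by simp
  have in_col_space: "Q *\<^sub>v col Y j \<in> V.col_space Q" if "Y \<in> carrier_mat q c" for Y
    unfolding V.col_space_eq[OF Q] using Q that j by auto
  have col_PQ: "col (P * (Q * Y)) j = P *\<^sub>v (Q *\<^sub>v col Y j)" if "Y \<in> carrier_mat q c" for Y
    using col_mult2[OF P mult_carrier_mat[OF Q that] j] col_mult2[OF Q that j] by simp
  have "P *\<^sub>v (Q *\<^sub>v col Z j) = P *\<^sub>v (Q *\<^sub>v col Z' j)"
    using eq col_PQ[OF Z] col_PQ[OF Z'] by metis
  then have "Q *\<^sub>v col Z j = Q *\<^sub>v col Z' j"
    by (rule inj_onD[OF inj_on_col_space_if_rank_mult_eq[OF P Q r] _ in_col_space[OF Z] in_col_space[OF Z']])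
  then show "col (Q * Z) j = col (Q * Z') j"
    by (simp only: col_mult2[OF Q Z j] col_mult2[OF Q Z' j])
qed (use Z Z' in auto)

lemma col_space_mult_eq_if_rank_mult_eq:
  fixes P Q :: "'a::field mat"
  assumes P: "P \<in> carrier_mat p m" and Q: "Q \<in> carrier_mat m q"
    and r: "vec_space.rank p (P * Q) = vec_space.rank p P"
  shows "vec_space.col_space p (P * Q) = vec_space.col_space p P"
proof -
  interpret W: vec_space "TYPE('a)" p .
  have PQ: "P * Q \<in> carrier_mat p q" using P Q by auto
  let ?SP = "W.col_space P" and ?SPQ = "W.col_space (P * Q)"
  have subP: "VectorSpace.subspace class_ring ?SP W.V"
    unfolding W.col_space_def using cols_dim[of "P"] P by (intro W.span_is_subspace) auto
  have subPQ: "VectorSpace.subspace class_ring ?SPQ W.V"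
    unfolding W.col_space_def using cols_dim[of "P * Q"] P by (intro W.span_is_subspace) auto
  have "?SPQ \<subseteq> ?SP"
    unfolding W.col_space_eq[OF P] W.col_space_eq[OF PQ] using P Q by auto
  then have sub: "VectorSpace.subspace class_ring ?SPQ (W.vs ?SP)"
    using W.nested_subspaces[OF subP subPQ] by simp
  interpret SP: vectorspace class_ring "W.vs ?SP" using W.subspace_is_vs[OF subP] .
  show ?thesis
    using SP.subspace_eq_carrier_if_dim_eq[OF sub W.fin_dim_span_cols[OF P, folded W.col_space_def]] r
    unfolding W.rank_def W.col_space_def by simp
qed

lemma right_factor_if_rank_mult_eq:
  fixes P Q :: "'a::field mat"
  assumes P: "P \<in> carrier_mat p m" and Q: "Q \<in> carrier_mat m q"
    and r: "vec_space.rank p (P * Q) = vec_space.rank p P"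
  shows "\<exists>V \<in> carrier_mat q m. P = P * Q * V"
proof -
  interpret W: vec_space "TYPE('a)" p .
  have PQ: "P * Q \<in> carrier_mat p q" using P Q by auto
  have "col P j \<in> W.col_space P" if "j < m" for j
    unfolding W.col_space_def using P that cols_dim[of P] by (intro W.span_mem) (auto simp: cols_def)
  then have "\<forall>j < m. \<exists>x \<in> carrier_vec q. (P * Q) *\<^sub>v x = col P j"
    using col_space_mult_eq_if_rank_mult_eq[OF P Q r] P Q by (auto simp: W.col_space_eq[OF PQ])
  then obtain xs where xs: "\<And>j. j < m \<Longrightarrow> xs j \<in> carrier_vec q \<and> (P * Q) *\<^sub>v xs j = col P j"
    by metis
  define V where "V = mat q m (\<lambda>(i,j). xs j $ i)"
  have V: "V \<in> carrier_mat q m" unfolding V_def by simp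
  have "P = P * Q * V"
  proof (rule mat_col_eqI)
    fix j assume "j < dim_col (P * Q * V)"
    then have j: "j < m" using V by simp
    have "col V j = xs j" using xs[OF j] j unfolding V_def by (auto intro!: eq_vecI)
    then show "col P j = col (P * Q * V) j" using xs[OF j] col_mult2[OF PQ V j] by simp
  qed (use P V in auto)
  with V show ?thesis by blast
qed

section \<open>Products and powers of matrices\<close>

lemma assoc_mult_mat_dims [simp]:
  "dim_col A = dim_row B \<Longrightarrow> dim_col B = dim_row C \<Longrightarrow> A * B * C = A * (B * C)"
  by (rule assoc_mult_mat[of A "dim_row A" "dim_col A" B "dim_col B" C "dim_col C"]) auto

lemma pow_mat_add:
  fixes M :: "'a::semiring_1 mat"
  assumes "M \<in> carrier_mat n n"
  shows "M ^\<^sub>m a * M ^\<^sub>m b = M ^\<^sub>m (a + b)"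
  by (induction b) (use assms in \<open>auto simp flip: assoc_mult_mat_dims\<close>)

lemma pow_mat_Suc_left:
  fixes M :: "'a::semiring_1 mat"
  assumes "M \<in> carrier_mat n n"
  shows "M ^\<^sub>m Suc k = M * M ^\<^sub>m k"
  using pow_mat_add[OF assms, of 1 k] assms by simp

lemma pow_mat_mult_shift:
  fixes A B :: "'a::semiring_1 mat"
  assumes "A \<in> carrier_mat m n" and "B \<in> carrier_mat n m"
  shows "(B * A) ^\<^sub>m k * B = B * (A * B) ^\<^sub>m k"
  by (induction k) (use assms in \<open>auto simp flip: assoc_mult_mat_dims\<close>)

lemma pow_mat_mult_pow_mat:
  fixes M :: "'a::semiring_1 mat"
  assumes "M \<in> carrier_mat n n" and "dim_row W = n"
  shows "M ^\<^sub>m a * (M ^\<^sub>m b * W) = M ^\<^sub>m (a + b) * W"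
  using assms by (simp flip: pow_mat_add[OF assms(1)])

lemma mult_mult_pow_mat_commute:
  fixes A B :: "'a::semiring_1 mat"
  assumes "A \<in> carrier_mat m n" and "B \<in> carrier_mat n m" and "dim_row W = n"
  shows "B * (A * ((B * A) ^\<^sub>m k * W)) = (B * A) ^\<^sub>m k * (B * (A * W))"
proof -
  have BA: "B * A \<in> carrier_mat n n" using assms by auto
  have "B * (A * ((B * A) ^\<^sub>m k * W)) = (B * A) ^\<^sub>m Suc k * W"
    using assms by (simp add: pow_mat_Suc_left[OF BA] del: pow_mat.simps(2))
  also have "\<dots> = (B * A) ^\<^sub>m k * (B * (A * W))" using assms BA by simp
  finally show ?thesis .
qed

section \<open>The Minkowski adjoint and the Minkowski inverse\<close>

definition mink_sign :: "nat \<Rightarrow> complex" where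
  "mink_sign i = (if i = 0 then 1 else -1)"

lemma mink_sign_square [simp]: "mink_sign i * mink_sign i = 1"
  and cnj_mink_sign [simp]: "cnj (mink_sign i) = mink_sign i"
  unfolding mink_sign_def by auto

lemma minkowski_G_dims [simp]: "dim_row (minkowski_G k) = k" "dim_col (minkowski_G k) = k"
  unfolding minkowski_G_def by auto

lemma minkowski_G_mult_index:
  assumes "dim_row M = k" "i < k" "j < dim_col M"
  shows "(minkowski_G k * M) $$ (i, j) = mink_sign i * M $$ (i, j)"
proof -
  have "(minkowski_G k * M) $$ (i, j) = (\<Sum>l = 0..<k. minkowski_G k $$ (i, l) * M $$ (l, j))"
    using assms by (simp add: scalar_prod_def)
  also have "\<dots> = (\<Sum>l = 0..<k. if l = i then mink_sign i * M $$ (i, j) else 0)"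
    using assms(2) by (intro sum.cong) (auto simp: minkowski_G_def mink_sign_def)
  finally show ?thesis using assms(2) by simp
qed

lemma mult_minkowski_G_index:
  assumes "dim_col M = k" "i < dim_row M" "j < k"
  shows "(M * minkowski_G k) $$ (i, j) = M $$ (i, j) * mink_sign j"
proof -
  have "(M * minkowski_G k) $$ (i, j) = (\<Sum>l = 0..<k. M $$ (i, l) * minkowski_G k $$ (l, j))"
    using assms by (simp add: scalar_prod_def)
  also have "\<dots> = (\<Sum>l = 0..<k. if l = j then M $$ (i, j) * mink_sign j else 0)"
    using assms(3) by (intro sum.cong) (auto simp: minkowski_G_def mink_sign_def)
  finally show ?thesis using assms(3) by simp
qed

lemma mat_adjoint_dims [simp]:
  "dim_row (mat_adjoint M) = dim_col M" "dim_col (mat_adjoint M) = dim_row M"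
  unfolding mat_adjoint_def by simp_all

lemma mink_adj_dims [simp]: "dim_row (mink_adj M) = dim_col M" "dim_col (mink_adj M) = dim_row M"
  unfolding mink_adj_def by simp_all

lemma mink_adj_carrier: "M \<in> carrier_mat p q \<Longrightarrow> mink_adj M \<in> carrier_mat q p"
  by auto

lemma mat_adjoint_index:
  "i < dim_col M \<Longrightarrow> j < dim_row M \<Longrightarrow> mat_adjoint M $$ (i, j) = cnj (M $$ (j, i))"
  unfolding mat_adjoint_def by (simp add: mat_of_rows_def)

lemma mink_adj_index:
  assumes "i < dim_col M" "j < dim_row M"
  shows "mink_adj M $$ (i, j) = mink_sign i * mink_sign j * cnj (M $$ (j, i))"
proof -
  have "mink_adj M $$ (i, j) = (minkowski_G (dim_col M) * mat_adjoint M) $$ (i, j) * mink_sign j"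
    unfolding mink_adj_def by (rule mult_minkowski_G_index) (use assms in simp_all)
  also have "\<dots> = mink_sign i * mat_adjoint M $$ (i, j) * mink_sign j"
    by (subst minkowski_G_mult_index) (use assms in simp_all)
  finally show ?thesis using assms by (simp add: mat_adjoint_index)
qed

lemma mink_adj_mult [simp]:
  assumes "dim_col P = dim_row Q"
  shows "mink_adj (P * Q) = mink_adj Q * mink_adj P"
proof (rule eq_matI)
  fix i j assume "i < dim_row (mink_adj Q * mink_adj P)" "j < dim_col (mink_adj Q * mink_adj P)"
  then have i: "i < dim_col Q" and j: "j < dim_row P" by auto
  have "(mink_adj Q * mink_adj P) $$ (i, j)
      = (\<Sum>l = 0..<dim_row Q. mink_adj Q $$ (i, l) * mink_adj P $$ (l, j))"
    using i j assms by (simp add: scalar_prod_def)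
  also have "\<dots> = (\<Sum>l = 0..<dim_row Q. mink_sign i * mink_sign j * cnj (P $$ (j, l) * Q $$ (l, i)))"
    using i j assms
    by (intro sum.cong) (auto simp: mink_adj_index mult_ac)
  also have "\<dots> = mink_adj (P * Q) $$ (i, j)"
    using i j assms by (simp add: mink_adj_index scalar_prod_def sum_distrib_left)
  finally show "mink_adj (P * Q) $$ (i, j) = (mink_adj Q * mink_adj P) $$ (i, j)" ..
qed auto

lemma mink_adj_mink_adj [simp]: "mink_adj (mink_adj M) = M"
  by (rule eq_matI) (auto simp: mink_adj_index mult_ac)

lemma is_mink_inverse_unique:
  assumes X: "is_mink_inverse A X" and X': "is_mink_inverse A X'"
  shows "X = X'"
proof -
  have d: "X \<in> carrier_mat (dim_col A) (dim_row A)" "X' \<in> carrier_mat (dim_col A) (dim_row A)"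
    and e: "A * X * A = A" "X * A * X = X" "mink_adj (A * X) = A * X" "mink_adj (X * A) = X * A"
    and e': "A * X' * A = A" "X' * A * X' = X'"
      "mink_adj (A * X') = A * X'" "mink_adj (X' * A) = X' * A"
    using X X' unfolding is_mink_inverse_def by auto
  have adj_A: "mink_adj A = mink_adj A * mink_adj X * mink_adj A"
    "mink_adj A = mink_adj A * mink_adj X' * mink_adj A"
    using arg_cong[OF e(1), of mink_adj] arg_cong[OF e'(1), of mink_adj] d by auto
  have "X = X * mink_adj (A * X)" using e(2) e(3) d by simp
  also have "\<dots> = X * (mink_adj X * (mink_adj A * mink_adj X' * mink_adj A))"
    using d by (simp flip: adj_A(2))
  also have "\<dots> = X * (mink_adj (A * X) * mink_adj (A * X'))" using d by simp
  also have "\<dots> = X * A * X * A * X'" unfolding e(3) e'(3) using d by simp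
  finally have left: "X = X * A * X'" using e(2) by simp
  have "X' = mink_adj (X' * A) * X'" using e'(2) e'(4) d by simp
  also have "\<dots> = (mink_adj A * mink_adj X * mink_adj A * mink_adj X') * X'"
    using d by (simp flip: adj_A(1))
  also have "\<dots> = mink_adj (X * A) * mink_adj (X' * A) * X'" using d by simp
  also have "\<dots> = X * A * X' * A * X'" unfolding e(4) e'(4) using d by simp
  finally have right: "X' = X * A * X'" using e'(2) d by simp
  from left right[symmetric] show ?thesis by (rule trans)
qed

lemma mink_inverse_eqI: "is_mink_inverse A X \<Longrightarrow> mink_inverse A = X"
  unfolding mink_inverse_def using is_mink_inverse_unique by blast

lemma is_mink_inverse_if_inner_inverse_factors_adj:
  assumes A: "A \<in> carrier_mat m n" and T: "T \<in> carrier_mat n n" and S: "S \<in> carrier_mat m m"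
    and Y_T: "Y = T * mink_adj A" and Y_S: "Y = mink_adj A * S"
    and inner: "A * Y * A = A"
  shows "is_mink_inverse A Y"
proof -
  have Y: "Y \<in> carrier_mat n m" unfolding Y_T using T mink_adj_carrier[OF A] by simp
  have adj_A: "mink_adj A = mink_adj A * mink_adj (A * Y)" "mink_adj A = mink_adj (Y * A) * mink_adj A"
    using arg_cong[OF inner, of mink_adj] A Y by auto
  have AY: "A * Y = A * Y * mink_adj (A * Y)"
  proof -
    have "A * Y = A * (T * (mink_adj A * mink_adj (A * Y)))" using Y_T adj_A(1) by simp
    also have "\<dots> = A * Y * mink_adj (A * Y)" using Y_T A T Y by simp
    finally show ?thesis .
  qed
  have adj_AY: "mink_adj (A * Y) = A * Y"
  proof -
    have "mink_adj (A * Y) = mink_adj (A * Y * mink_adj (A * Y))" using AY by (rule arg_cong)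
    also have "\<dots> = A * Y * mink_adj (A * Y)"
      by (subst mink_adj_mult) (use A Y in auto)
    finally show ?thesis using AY by simp
  qed
  have YA: "Y * A = mink_adj (Y * A) * (Y * A)"
  proof -
    have "Y * A = mink_adj (Y * A) * mink_adj A * S * A" using Y_S adj_A(2) by simp
    also have "\<dots> = mink_adj (Y * A) * (Y * A)" using Y_S A S Y by simp
    finally show ?thesis .
  qed
  have adj_YA: "mink_adj (Y * A) = Y * A"
  proof -
    have "mink_adj (Y * A) = mink_adj (mink_adj (Y * A) * (Y * A))" using YA by (rule arg_cong)
    also have "\<dots> = mink_adj (Y * A) * (Y * A)"
      by (subst mink_adj_mult) (use A Y in auto)
    finally show ?thesis using YA by simp
  qed
  have "Y = T * (mink_adj A * (A * Y))" using Y_T adj_A(1) adj_AY by simp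
  then have "Y * A * Y = Y" using Y_T A T Y by simp
  with Y A inner adj_AY adj_YA show ?thesis unfolding is_mink_inverse_def by simp
qed

section \<open>Cancellation under the rank condition\<close>

locale mink_rank_condition =
  fixes A :: "complex mat" and m n :: nat
  assumes A_carrier: "A \<in> carrier_mat m n"
    and rank_mult_adj: "crank (A * mink_adj A) = crank A"
    and rank_adj_mult: "crank (mink_adj A * A) = crank A"
begin

lemma A_dims [simp]: "dim_row A = m" "dim_col A = n"
  using carrier_matD[OF A_carrier] by simp_all

lemma adj_mult_cancel_left:
  assumes "Z \<in> carrier_mat n c" "Z' \<in> carrier_mat n c"
    and "mink_adj A * (A * Z) = mink_adj A * (A * Z')"
  shows "A * Z = A * Z'"
  using mult_left_cancel_if_rank_mult_eq[OF mink_adj_carrier[OF A_carrier] A_carrier _ assms]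
    rank_adj_mult unfolding crank_def by simp

lemma adj_mult_cancel_right:
  assumes "dim_col Z = n" "dim_col Z' = n"
    and "Z * (mink_adj A * A) = Z' * (mink_adj A * A)"
  shows "Z * mink_adj A = Z' * mink_adj A"
proof -
  have adj_Y_adj_mult: "mink_adj (Y * (mink_adj A * A)) = mink_adj A * (A * mink_adj Y)"
    and adj_A_adj_Y: "mink_adj (A * mink_adj Y) = Y * mink_adj A" if "dim_col Y = n" for Y
    using that by simp_all
  have "mink_adj A * (A * mink_adj Z) = mink_adj (Z * (mink_adj A * A))"
    using adj_Y_adj_mult[OF assms(1)] by (rule sym)
  also have "\<dots> = mink_adj (Z' * (mink_adj A * A))" using assms(3) by (rule arg_cong)
  also have "\<dots> = mink_adj A * (A * mink_adj Z')" using adj_Y_adj_mult[OF assms(2)] .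
  moreover have "dim_row Z = dim_row Z'" using arg_cong[OF assms(3), of dim_row] by simp
  ultimately have "A * mink_adj Z = A * mink_adj Z'"
    using assms(1,2) by (intro adj_mult_cancel_left[of _ "dim_row Z"]) (auto intro: carrier_matI)
  then have "mink_adj (A * mink_adj Z) = mink_adj (A * mink_adj Z')" by (rule arg_cong)
  then show ?thesis unfolding adj_A_adj_Y[OF assms(1)] adj_A_adj_Y[OF assms(2)] .
qed

lemma A_eq_mult_adj_factor: obtains V where "V \<in> carrier_mat m n" "A = A * (mink_adj A * V)"
proof -
  have "vec_space.rank m (A * mink_adj A) = vec_space.rank m A"
    using rank_mult_adj unfolding crank_def by simp
  then obtain V where V: "V \<in> carrier_mat m n" "A = A * mink_adj A * V"
    using right_factor_if_rank_mult_eq[OF A_carrier mink_adj_carrier[OF A_carrier]] by blast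
  moreover have "A * mink_adj A * V = A * (mink_adj A * V)" using V(1) by simp
  ultimately show thesis using that by metis
qed

lemma mult_adj_cancel_left:
  assumes "dim_row Z = m" "dim_row Z' = m" and "A * (mink_adj A * Z) = A * (mink_adj A * Z')"
  shows "mink_adj A * Z = mink_adj A * Z'"
proof -
  obtain V where V: "V \<in> carrier_mat m n" "A = A * (mink_adj A * V)"
    by (rule A_eq_mult_adj_factor)
  have "mink_adj (A * (mink_adj A * V)) = mink_adj V * (A * mink_adj A)" using V(1) by simp
  with arg_cong[OF V(2), of mink_adj]
  have adj_A: "mink_adj A = mink_adj V * (A * mink_adj A)" by (rule trans)
  have "mink_adj A * Z = mink_adj V * (A * mink_adj A) * Z" by (simp only: adj_A[symmetric])
  also have "\<dots> = mink_adj V * (A * (mink_adj A * Z'))" using assms V(1) by simp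
  also have "\<dots> = mink_adj V * (A * mink_adj A) * Z'" using assms V(1) by simp
  finally show ?thesis by (simp only: adj_A[symmetric])
qed

lemma mult_adj_cancel_right:
  assumes "dim_col Z = m" "dim_col Z' = m" and "Z * (A * mink_adj A) = Z' * (A * mink_adj A)"
  shows "Z * A = Z' * A"
proof -
  obtain V where V: "V \<in> carrier_mat m n" "A = A * (mink_adj A * V)"
    by (rule A_eq_mult_adj_factor)
  have "Z * A = Z * (A * mink_adj A) * V" using V(1) assms(1) by (simp flip: V(2))
  also have "\<dots> = Z' * (A * mink_adj A) * V" by (simp only: assms(3))
  also have "\<dots> = Z' * A" using V(1) assms(2) by (simp flip: V(2))
  finally show ?thesis .
qed

lemma adj_mult_pow_cancel_left:
  assumes "Z \<in> carrier_mat n c" "Z' \<in> carrier_mat n c"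
    and "(mink_adj A * A) ^\<^sub>m j * (mink_adj A * (A * Z))
      = (mink_adj A * A) ^\<^sub>m j * (mink_adj A * (A * Z'))"
  shows "A * Z = A * Z'"
  using assms
proof (induction j arbitrary: Z Z')
  case 0
  then have "mink_adj A * (A * Z) = mink_adj A * (A * Z')" by simp
  then show ?case by (rule adj_mult_cancel_left[OF 0(1,2)])
next
  case (Suc j)
  have carrier: "mink_adj A * (A * Y) \<in> carrier_mat n c" if "Y \<in> carrier_mat n c" for Y
    using that mink_adj_carrier[OF A_carrier] A_carrier by (intro mult_carrier_mat)
  have "A * (mink_adj A * (A * Z)) = A * (mink_adj A * (A * Z'))"
    using Suc.prems(3) by (intro Suc.IH[OF carrier[OF Suc.prems(1)] carrier[OF Suc.prems(2)]]) simp
  then have "mink_adj A * (A * Z) = mink_adj A * (A * Z')"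
    by (rule mult_adj_cancel_left[rotated 2]) simp_all
  then show ?case by (rule adj_mult_cancel_left[OF Suc.prems(1,2)])
qed

lemma mult_adj_pow_cancel_right:
  assumes "dim_col Z = m" "dim_col Z' = m"
    and "Z * (A * ((mink_adj A * A) ^\<^sub>m j * mink_adj A))
      = Z' * (A * ((mink_adj A * A) ^\<^sub>m j * mink_adj A))"
  shows "Z * A = Z' * A"
  using assms
proof (induction j arbitrary: Z Z')
  case 0
  then have "Z * (A * mink_adj A) = Z' * (A * mink_adj A)" by simp
  then show ?case by (rule mult_adj_cancel_right[OF 0(1,2)])
next
  case (Suc j)
  have "Z * (A * mink_adj A) * A = Z' * (A * mink_adj A) * A"
    using Suc.prems(3) by (intro Suc.IH)
      (simp_all add: Suc.prems(1,2) mult_mult_pow_mat_commute[OF A_carrier mink_adj_carrier[OF A_carrier]])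
  then have "Z * A * (mink_adj A * A) = Z' * A * (mink_adj A * A)"
    using Suc.prems(1,2) by simp
  then have "Z * A * mink_adj A = Z' * A * mink_adj A"
    by (rule adj_mult_cancel_right[rotated 2]) (simp_all add: Suc.prems(1,2))
  then have "Z * (A * mink_adj A) = Z' * (A * mink_adj A)"
    using Suc.prems(1,2) by simp
  then show ?case by (rule mult_adj_cancel_right[OF Suc.prems(1,2)])
qed

lemma pow_formula_inner_inverse:
  assumes X: "X \<in> carrier_mat m n"
    and inner: "((mink_adj A * A) ^\<^sub>m (k + l + 1) * mink_adj A) * X
        * ((mink_adj A * A) ^\<^sub>m (k + l + 1) * mink_adj A)
      = (mink_adj A * A) ^\<^sub>m (k + l + 1) * mink_adj A"
  shows "A * ((mink_adj A * A) ^\<^sub>m k * mink_adj A * X * (mink_adj A * A) ^\<^sub>m l * mink_adj A) * A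
    = A"
proof -
  let ?M = "mink_adj A * A"
  define Y where "Y = ?M ^\<^sub>m k * mink_adj A * X * ?M ^\<^sub>m l * mink_adj A"
  have BA: "?M \<in> carrier_mat n n" using A_carrier by auto
  have X_dims: "dim_row X = m" "dim_col X = n" using X by auto
  have Y: "Y \<in> carrier_mat n m" unfolding Y_def using X_dims by (intro carrier_matI) simp_all
  note pow_simps = pow_mat_mult_pow_mat[OF BA]
    mult_mult_pow_mat_commute[OF A_carrier mink_adj_carrier[OF A_carrier]]
  have "k + l + 1 = Suc (l + k)" by simp
  note inner' = inner[unfolded this]
  \<comment> \<open>After normalisation, with P = ?M ^ (k + l + 1) * mink_adj A, the left-hand side is
     P * X * P and the right-hand side is P.\<close>
  have "?M ^\<^sub>m l * (mink_adj A * (A * (Y * (A * (?M ^\<^sub>m k * mink_adj A)))))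
      = ?M ^\<^sub>m l * (mink_adj A * (A * (?M ^\<^sub>m k * mink_adj A)))"
    using inner' X_dims unfolding Y_def by (simp add: pow_simps)
  then have "A * (Y * (A * (?M ^\<^sub>m k * mink_adj A))) = A * (?M ^\<^sub>m k * mink_adj A)"
    using Y by (intro adj_mult_pow_cancel_left[of _ m]) auto
  then have "A * Y * (A * (?M ^\<^sub>m k * mink_adj A)) = 1\<^sub>m m * (A * (?M ^\<^sub>m k * mink_adj A))"
    using Y by simp
  then have "A * Y * A = 1\<^sub>m m * A"
    by (rule mult_adj_pow_cancel_right[rotated 2]) (use Y in simp_all)
  then show ?thesis unfolding Y_def by simp
qed

lemma mink_inverse_eq_pow_formula:
  assumes X: "X \<in> carrier_mat m n"
    and inner: "((mink_adj A * A) ^\<^sub>m (k + l + 1) * mink_adj A) * X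
        * ((mink_adj A * A) ^\<^sub>m (k + l + 1) * mink_adj A)
      = (mink_adj A * A) ^\<^sub>m (k + l + 1) * mink_adj A"
  shows "mink_inverse A
    = (mink_adj A * A) ^\<^sub>m k * mink_adj A * X * (mink_adj A * A) ^\<^sub>m l * mink_adj A"
proof (rule mink_inverse_eqI, rule is_mink_inverse_if_inner_inverse_factors_adj)
  let ?M = "mink_adj A * A"
  have B: "mink_adj A \<in> carrier_mat n m" using mink_adj_carrier[OF A_carrier] .
  show "?M ^\<^sub>m k * mink_adj A * X * ?M ^\<^sub>m l * mink_adj A
      = (?M ^\<^sub>m k * mink_adj A * X * ?M ^\<^sub>m l) * mink_adj A" ..
  show "?M ^\<^sub>m k * mink_adj A * X * ?M ^\<^sub>m l * mink_adj A
      = mink_adj A * ((A * mink_adj A) ^\<^sub>m k * X * ?M ^\<^sub>m l * mink_adj A)"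
    unfolding pow_mat_mult_shift[OF A_carrier B] using X by simp
  show "?M ^\<^sub>m k * mink_adj A * X * ?M ^\<^sub>m l \<in> carrier_mat n n"
    "(A * mink_adj A) ^\<^sub>m k * X * ?M ^\<^sub>m l * mink_adj A \<in> carrier_mat m m"
    using X by (auto intro!: carrier_matI)
qed (use A_carrier pow_formula_inner_inverse[OF X inner] in simp_all)

end

theorem theorem8p1:
  fixes A X :: "complex mat" and m n k l :: nat
  assumes "0 < m" and "0 < n"
    and "A \<in> carrier_mat m n"
    and "crank (A * mink_adj A) = crank A"
    and "crank (mink_adj A * A) = crank A"
    and "X \<in> carrier_mat m n"
    and "((mink_adj A * A) ^\<^sub>m (k + l + 1) * mink_adj A) * X
           * ((mink_adj A * A) ^\<^sub>m (k + l + 1) * mink_adj A)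
         = (mink_adj A * A) ^\<^sub>m (k + l + 1) * mink_adj A"
  shows "mink_inverse A
         = (mink_adj A * A) ^\<^sub>m k * mink_adj A * X * (mink_adj A * A) ^\<^sub>m l * mink_adj A"
proof -
  interpret mink_rank_condition A m n using assms(3-5) by unfold_locales
  show ?thesis using assms(6,7) by (rule mink_inverse_eq_pow_formula)
qed

end
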